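(* Let $p$ be a prime and $\alpha\in\mathbb{Q}_p$ an algebraic number, and let $(b_n)$ be the sequence of partial quotients produced from $\alpha$ by Algorithm C (defined in the context), after eliminating all zero partial quotients. Then for every $n$ such that $v_p(b_n)<0$, $v_p(b_{n+1})=0$ and $v_p(b_{n+2})=0$, one has $v_p(b_{n+1}b_{n+2}+1)=0$.
   Context: Let $\mathcal{R}=\{-\frac{p-1}{2},\dots,0,\dots,\frac{p-1}{2}\}$ if $p$ is odd, and $\mathcal{R}=\{0,1\}$ if $p=2$. Every nonzero $\alpha\in\mathbb{Q}_p$ is written uniquely as $\alpha=\sum_{n\ge r}a_np^n$ with $r=v_p(\alpha)$, $a_n\in\mathcal{R}$, $a_r\ne0$. Put $s(\alpha)=\sum_{n=r}^{0}a_np^n$, $t(\alpha)=\sum_{n=r}^{-1}a_np^n$ (empty sums are $0$; $s(0)=t(0)=0$). For an algebraic $\alpha\in\mathbb{Q}_p$ whose minimal polynomial over $\mathbb{Q}$ has degree $d$, with trace $\operatorname{Tr}(\alpha)$, and $\operatorname{round}(x)$ the integer nearest to the real $x$, define $\bar s(\alpha)=\operatorname{round}\!\left(\frac{\operatorname{Tr}(\alpha)/d-s(\alpha)}{p}\right)p+s(\alpha)$ and $\bar t(\alpha)=\operatorname{round}\!\left(\operatorname{Tr}(\alpha)/d-t(\alpha)\right)+t(\alpha)$. Algorithm C: set $\alpha_0=\alpha$; for $n\ge0$ let $b_n=\bar s(\alpha_n)$ if $n\equiv0\pmod 3$ and $b_n=\bar t(\alpha_n)$ if $n\equiv1,2\pmod3$;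 if $\alpha_n=b_n$ stop, otherwise set $\alpha_{n+1}=\frac{1}{\alpha_n-b_n}$. Zero partial quotients may occur; they are eliminated from the sequence via $[\dots,b_{n-1},b_n,0,b_{n+1},b_{n+2},\dots]=[\dots,b_{n-1},b_n+b_{n+1},b_{n+2},\dots]$, and the resulting sequence is re-indexed consecutively. *)

theory Defs
  imports Complex_Main "HOL-Computational_Algebra.Computational_Algebra"
begin

definition qval :: "nat \<Rightarrow> rat \<Rightarrow> int" where
  "qval p q = (case quotient_of q of (a, b) \<Rightarrow>
      int (multiplicity (int p) a) - int (multiplicity (int p) b))"

text \<open>"x has valuation at least N" (x = 0 counts as valuation infinity).\<close>
definition vge :: "('k::zero \<Rightarrow> int) \<Rightarrow> 'k \<Rightarrow> int \<Rightarrow> bool" where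
  "vge v x N \<longleftrightarrow> x = 0 \<or> v x \<ge> N"

text \<open>A field of characteristic 0 with a valuation v (v 0 is irrelevant) that
  extends the p-adic valuation of Q, in which Q is dense and which is complete:
  such a field is (isomorphic to) Q_p with its p-adic valuation.\<close>
definition padic_field :: "nat \<Rightarrow> ('k::field_char_0 \<Rightarrow> int) \<Rightarrow> bool" where
  "padic_field p v \<longleftrightarrow> prime p \<and>
     (\<forall>x y. x \<noteq> 0 \<and> y \<noteq> 0 \<longrightarrow> v (x * y) = v x + v y) \<and>
     (\<forall>x y. x \<noteq> 0 \<and> y \<noteq> 0 \<and> x + y \<noteq> 0 \<longrightarrow> v (x + y) \<ge> min (v x) (v y)) \<and>
     (\<forall>q::rat. q \<noteq> 0 \<longrightarrow> v (of_rat q) = qval p q) \<and>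
     (\<forall>x. \<forall>N. \<exists>q::rat. vge v (x - of_rat q) N) \<and>
     (\<forall>X::nat \<Rightarrow> 'k. (\<forall>N. \<exists>M. \<forall>m\<ge>M. \<forall>n\<ge>M. vge v (X m - X n) N) \<longrightarrow>
        (\<exists>L. \<forall>N. \<exists>M. \<forall>n\<ge>M. vge v (X n - L) N))"

definition digitset :: "nat \<Rightarrow> int set" where
  "digitset p = (if p = 2 then {0, 1} else {- ((int p - 1) div 2) .. (int p - 1) div 2})"

definition is_padic_expansion :: "nat \<Rightarrow> ('k::field_char_0 \<Rightarrow> int) \<Rightarrow> 'k \<Rightarrow> (int \<Rightarrow> int) \<Rightarrow> bool" where
  "is_padic_expansion p v \<alpha> a \<longleftrightarrow>
     (\<forall>n. a n \<in> digitset p) \<and> (\<forall>n < v \<alpha>. a n = 0) \<and> a (v \<alpha>) \<noteq> 0 \<and>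
     (\<forall>N \<ge> v \<alpha>. vge v (\<alpha> - of_rat (\<Sum>n\<in>{v \<alpha>..N}. of_int (a n) * of_nat p powi n)) (N + 1))"

definition digits :: "nat \<Rightarrow> ('k::field_char_0 \<Rightarrow> int) \<Rightarrow> 'k \<Rightarrow> int \<Rightarrow> int" where
  "digits p v \<alpha> = (THE a. is_padic_expansion p v \<alpha> a)"

definition s_part :: "nat \<Rightarrow> ('k::field_char_0 \<Rightarrow> int) \<Rightarrow> 'k \<Rightarrow> rat" where
  "s_part p v \<alpha> = (if \<alpha> = 0 then 0 else
     (\<Sum>n\<in>{v \<alpha>..0}. of_int (digits p v \<alpha> n) * of_nat p powi n))"

definition t_part :: "nat \<Rightarrow> ('k::field_char_0 \<Rightarrow> int) \<Rightarrow> 'k \<Rightarrow> rat" where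
  "t_part p v \<alpha> = (if \<alpha> = 0 then 0 else
     (\<Sum>n\<in>{v \<alpha>..-1}. of_int (digits p v \<alpha> n) * of_nat p powi n))"

definition is_min_poly :: "rat poly \<Rightarrow> 'k::field_char_0 \<Rightarrow> bool" where
  "is_min_poly f \<alpha> \<longleftrightarrow> lead_coeff f = 1 \<and> poly (map_poly of_rat f) \<alpha> = 0 \<and>
     (\<forall>g::rat poly. g \<noteq> 0 \<and> poly (map_poly of_rat g) \<alpha> = 0 \<longrightarrow> degree f \<le> degree g)"

definition min_poly :: "'k::field_char_0 \<Rightarrow> rat poly" where
  "min_poly \<alpha> = (THE f. is_min_poly f \<alpha>)"

definition trace_rat :: "'k::field_char_0 \<Rightarrow> rat" where
  "trace_rat \<alpha> = - coeff (min_poly \<alpha>) (degree (min_poly \<alpha>) - 1)"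

definition sbar :: "nat \<Rightarrow> ('k::field_char_0 \<Rightarrow> int) \<Rightarrow> 'k \<Rightarrow> rat" where
  "sbar p v \<alpha> = of_int (round ((trace_rat \<alpha> / of_nat (degree (min_poly \<alpha>)) - s_part p v \<alpha>) / of_nat p))
                 * of_nat p + s_part p v \<alpha>"

definition tbar :: "nat \<Rightarrow> ('k::field_char_0 \<Rightarrow> int) \<Rightarrow> 'k \<Rightarrow> rat" where
  "tbar p v \<alpha> = of_int (round (trace_rat \<alpha> / of_nat (degree (min_poly \<alpha>)) - t_part p v \<alpha>))
                 + t_part p v \<alpha>"

definition algC_b :: "nat \<Rightarrow> ('k::field_char_0 \<Rightarrow> int) \<Rightarrow> nat \<Rightarrow> 'k \<Rightarrow> rat" where
  "algC_b p v n x = (if n mod 3 = 0 then sbar p v x else tbar p v x)"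

text \<open>The complete quotients; None once the algorithm has stopped.\<close>
primrec algC_alpha :: "nat \<Rightarrow> ('k::field_char_0 \<Rightarrow> int) \<Rightarrow> 'k \<Rightarrow> nat \<Rightarrow> 'k option" where
  "algC_alpha p v \<alpha> 0 = Some \<alpha>"
| "algC_alpha p v \<alpha> (Suc n) = (case algC_alpha p v \<alpha> n of None \<Rightarrow> None
     | Some x \<Rightarrow> (if x = of_rat (algC_b p v n x) then None
                  else Some (inverse (x - of_rat (algC_b p v n x)))))"

definition algC_raw :: "nat \<Rightarrow> ('k::field_char_0 \<Rightarrow> int) \<Rightarrow> 'k \<Rightarrow> nat \<Rightarrow> rat option" where
  "algC_raw p v \<alpha> n = map_option (algC_b p v n) (algC_alpha p v \<alpha> n)"

definition algC_raw_prefix :: "nat \<Rightarrow> ('k::field_char_0 \<Rightarrow> int) \<Rightarrow> 'k \<Rightarrow> nat \<Rightarrow> rat list" where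
  "algC_raw_prefix p v \<alpha> N =
     map the (takeWhile (\<lambda>x. x \<noteq> None) (map (algC_raw p v \<alpha>) [0..<N]))"

fun elim_zeros :: "rat list \<Rightarrow> rat list" where
  "elim_zeros (x # z # y # rest) =
     (if z = 0 then elim_zeros ((x + y) # rest) else x # elim_zeros (z # y # rest))"
| "elim_zeros xs = xs"

text \<open>The n-th partial quotient of the sequence after eliminating all zeros exists
  and equals c: it is the stable value of the n-th entry of the zero-eliminated
  finite prefixes.\<close>
definition algC_term :: "nat \<Rightarrow> ('k::field_char_0 \<Rightarrow> int) \<Rightarrow> 'k \<Rightarrow> nat \<Rightarrow> rat \<Rightarrow> bool" where
  "algC_term p v \<alpha> n c \<longleftrightarrow>
     (\<forall>\<^sub>F N in sequentially. n < length (elim_zeros (algC_raw_prefix p v \<alpha> N)) \<and>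
                              elim_zeros (algC_raw_prefix p v \<alpha> N) ! n = c)"

end

theory Submission
  imports Defs
begin

(* Write \<alpha>_j for the complete quotients and b_j for the raw partial quotients.
  As b_j agrees with the digit expansion of \<alpha>_j up to p^0 when j mod 3 = 0 and up
  to p^-1 otherwise, v(\<alpha>_j - b_j) >= 1, resp. >= 0. Hence v(\<alpha>_j) < 0 when
  j mod 3 = 1 and v(\<alpha>_j) <= 0 for all other j >= 1. So b_j has negative valuation
  when j mod 3 = 1, a zero quotient occurs only at some j with j mod 3 = 2 and is
  followed by a unit, and eliminating it merges a quotient of negative valuation with a
  unit into one of negative valuation. Two consecutive units of the reduced sequence
  are therefore raw quotients b_i, b_(i+1) with i mod 3 = 2. Then \<alpha>_i and
  \<alpha>_(i+1) are units, and since \<alpha>_(i+1) (\<alpha>_i - b_i) = 1,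
    b_i b_(i+1) + 1 = \<alpha>_i \<alpha>_(i+1) + b_i (b_(i+1) - \<alpha>_(i+1))
  is a unit plus an element of positive valuation. *)

lemma of_rat_power_int: "(of_rat (x powi n) :: 'a::field_char_0) = of_rat x powi n"
  by (simp add: power_int_def of_rat_power of_rat_inverse)

lemma qval_of_int: "qval p (of_int k) = int (multiplicity (int p) k)"
  by (simp add: qval_def quotient_of_int)

lemma vge_0 [simp]: "vge v 0 N"
  by (simp add: vge_def)

lemma zero_in_digitset: "p > 0 \<Longrightarrow> 0 \<in> digitset p"
  by (auto simp: digitset_def)

lemma digitset_not_congruent:
  assumes "prime p" and "a \<in> digitset p" "b \<in> digitset p" "a \<noteq> b"
  shows "\<not> int p dvd (a - b)"
proof
  assume "int p dvd (a - b)"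
  then have "int p \<le> \<bar>a - b\<bar>"
    using dvd_imp_le_int[of "a - b" "int p"] \<open>a \<noteq> b\<close> by simp
  moreover have "\<bar>a - b\<bar> < int p"
  proof (cases "p = 2")
    case False
    have "2 * ((int p - 1) div 2) \<le> int p - 1"
      by simp
    then show ?thesis
      using assms(2,3) False by (auto simp: digitset_def)
  qed (use assms(2-4) in \<open>auto simp: digitset_def\<close>)
  ultimately show False
    by simp
qed

lemma congruent_digit_exists:
  assumes "prime p"
  shows "\<exists>d\<in>digitset p. int p dvd (e - d)"
proof (cases "p = 2")
  case True
  have "int p dvd (e - e mod 2)"
    using True minus_mod_eq_mult_div[of e 2] by simp
  then show ?thesis
    using True by (auto simp: digitset_def)
next
  case False
  define h where "h = (int p - 1) div 2"
  have "odd p"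
    using assms False prime_odd_nat prime_ge_2_nat[OF assms] by force
  then have h: "2 * h = int p - 1"
    unfolding h_def by (auto elim: oddE)
  define d where "d = (e + h) mod int p - h"
  have "int p dvd (e - d)"
    using minus_mod_eq_mult_div[of "e + h" "int p"] by (simp add: d_def algebra_simps)
  moreover have "d \<in> digitset p"
    using False h prime_gt_0_nat[OF assms]
    by (simp add: digitset_def d_def h_def[symmetric] pos_mod_bound)
  ultimately show ?thesis
    by blast
qed

lemma algC_raw_prefix_nth:
  assumes "i < length (algC_raw_prefix p v \<alpha> N)"
  shows "algC_alpha p v \<alpha> i \<noteq> None \<and>
    algC_raw_prefix p v \<alpha> N ! i = algC_b p v i (the (algC_alpha p v \<alpha> i))"
proof -
  let ?T = "takeWhile (\<lambda>x. x \<noteq> None) (map (algC_raw p v \<alpha>) [0..<N])"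
  have "i < length ?T"
    using assms by (simp add: algC_raw_prefix_def)
  moreover have "length ?T \<le> N"
    using length_takeWhile_le[of _ "map (algC_raw p v \<alpha>) [0..<N]"] by simp
  moreover have "?T ! i \<noteq> None"
    using nth_mem[OF \<open>i < length ?T\<close>] set_takeWhileD by fastforce
  ultimately show ?thesis
    by (auto simp: algC_raw_prefix_def takeWhile_nth algC_raw_def)
qed

locale zero_elimination_pattern =
  fixes R :: "nat \<Rightarrow> rat" and D :: "nat \<Rightarrow> bool" and w :: "rat \<Rightarrow> int"
  assumes neg_at_mod3_eq_1: "D j \<Longrightarrow> j mod 3 = 1 \<Longrightarrow> R j \<noteq> 0 \<and> w (R j) < 0"
    and zero_at_mod3_eq_2: "D j \<Longrightarrow> j \<ge> 1 \<Longrightarrow> R j = 0 \<Longrightarrow> j mod 3 = 2"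
    and unit_after_zero:
      "D (Suc j) \<Longrightarrow> j mod 3 = 2 \<Longrightarrow> R j = 0 \<Longrightarrow> R (Suc j) \<noteq> 0 \<and> w (R (Suc j)) = 0"
    and neg_add_unit: "x \<noteq> 0 \<Longrightarrow> w x < 0 \<Longrightarrow> y \<noteq> 0 \<Longrightarrow> w y = 0 \<Longrightarrow> x + y \<noteq> 0 \<and> w (x + y) < 0"
begin

(* What is left of the raw quotients R 0, R 1, ... after zero elimination has consumed
  those before index q: the entries are R q, R (q + 1), ..., except that the head may
  be the result of a merge, which sits at an index q with q mod 3 = 0 and has negative value under w. *)
definition raw_suffix :: "nat \<Rightarrow> rat list \<Rightarrow> bool" where
  "raw_suffix q L \<longleftrightarrow> (\<forall>j < q + length L. D j) \<and>
     (\<forall>i. 1 \<le> i \<longrightarrow> i < length L \<longrightarrow> L ! i = R (q + i)) \<and>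
     (L \<noteq> [] \<longrightarrow> hd L = R q \<or> (q mod 3 = 0 \<and> hd L \<noteq> 0 \<and> w (hd L) < 0))"

lemma raw_suffix_tl:
  assumes "raw_suffix q (x # z # rest)"
  shows "raw_suffix (Suc q) (z # rest)"
proof -
  have entries: "\<And>i. 1 \<le> i \<Longrightarrow> i < length rest + 2 \<Longrightarrow> (x # z # rest) ! i = R (q + i)"
    using assms unfolding raw_suffix_def by auto
  have shifted: "(z # rest) ! i = R (Suc q + i)" if "i < length (z # rest)" for i
    using entries[of "Suc i"] that by simp
  show ?thesis
    unfolding raw_suffix_def
  proof (intro conjI allI impI)
    show "D j" if "j < Suc q + length (z # rest)" for j
      using assms that unfolding raw_suffix_def by simp
    show "(z # rest) ! i = R (Suc q + i)" if "i < length (z # rest)" for i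
      using shifted that .
    show "hd (z # rest) = R (Suc q) \<or> Suc q mod 3 = 0 \<and> hd (z # rest) \<noteq> 0 \<and> w (hd (z # rest)) < 0"
      using shifted[of 0] by simp
  qed
qed

lemma raw_suffix_merge:
  assumes "raw_suffix q (x # 0 # y # rest)"
  shows "raw_suffix (Suc (Suc q)) ((x + y) # rest) \<and> x + y \<noteq> 0 \<and> w (x + y) < 0"
proof -
  have entries: "\<And>i. 1 \<le> i \<Longrightarrow> i < length rest + 3 \<Longrightarrow> (x # 0 # y # rest) ! i = R (q + i)"
    and D: "\<And>j. j < q + length rest + 3 \<Longrightarrow> D j"
    and hd: "x = R q \<or> (q mod 3 = 0 \<and> x \<noteq> 0 \<and> w x < 0)"
    using assms unfolding raw_suffix_def by (auto simp: add_ac)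
  have "R (Suc q) = 0" "y = R (Suc (Suc q))"
    using entries[of 1] entries[of 2] by (simp_all add: numeral_2_eq_2)
  then have "Suc q mod 3 = 2"
    using zero_at_mod3_eq_2 D by simp
  then have "q mod 3 = 1" "Suc (Suc q) mod 3 = 0"
    by presburger+
  then have "x \<noteq> 0 \<and> w x < 0"
    using hd neg_at_mod3_eq_1[OF D] by auto
  moreover have "y \<noteq> 0 \<and> w y = 0"
    using unit_after_zero[OF D \<open>Suc q mod 3 = 2\<close>] \<open>R (Suc q) = 0\<close> \<open>y = R (Suc (Suc q))\<close> by simp
  ultimately have merged: "x + y \<noteq> 0 \<and> w (x + y) < 0"
    using neg_add_unit by blast
  have "raw_suffix (Suc (Suc q)) ((x + y) # rest)"
    unfolding raw_suffix_def
  proof (intro conjI allI impI)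
    show "D j" if "j < Suc (Suc q) + length ((x + y) # rest)" for j
      using D that by simp
    show "((x + y) # rest) ! i = R (Suc (Suc q) + i)" if "1 \<le> i" "i < length ((x + y) # rest)" for i
      using entries[of "Suc (Suc i)"] that by (cases i) auto
    show "hd ((x + y) # rest) = R (Suc (Suc q)) \<or> Suc (Suc q) mod 3 = 0 \<and>
        hd ((x + y) # rest) \<noteq> 0 \<and> w (hd ((x + y) # rest)) < 0"
      using merged \<open>Suc (Suc q) mod 3 = 0\<close> by simp
  qed
  with merged show ?thesis
    by blast
qed

lemma hd_elim_zeros:
  "raw_suffix q L \<Longrightarrow> L \<noteq> [] \<Longrightarrow> elim_zeros L \<noteq> [] \<and>
     (hd (elim_zeros L) = hd L \<or> hd (elim_zeros L) \<noteq> 0 \<and> w (hd (elim_zeros L)) < 0)"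
proof (induction L arbitrary: q rule: elim_zeros.induct)
  case (1 x z y rest)
  then show ?case
    using raw_suffix_merge[of q x y rest] by (cases "z = 0") force+
qed auto

lemma raw_suffix_consecutive_units:
  assumes "raw_suffix q (x # z # rest)"
    and "x \<noteq> 0" "w x = 0" "z \<noteq> 0" "w z = 0"
  shows "q mod 3 = 2 \<and> D (Suc q) \<and> R q = x \<and> R (Suc q) = z"
proof -
  have "x = R q" "z = R (Suc q)" "D q" "D (Suc q)"
    using assms unfolding raw_suffix_def by (auto dest: spec[of _ 1])
  then have "q mod 3 \<noteq> 1" "Suc q mod 3 \<noteq> 1"
    using neg_at_mod3_eq_1 assms(3,5) by force+
  then have "q mod 3 = 2"
    by presburger
  with \<open>x = R q\<close> \<open>z = R (Suc q)\<close> \<open>D (Suc q)\<close> show ?thesis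
    by simp
qed

lemma elim_zeros_consecutive_units:
  "raw_suffix q L \<Longrightarrow> Suc k < length (elim_zeros L) \<Longrightarrow>
   elim_zeros L ! k = c1 \<Longrightarrow> elim_zeros L ! Suc k = c2 \<Longrightarrow>
   c1 \<noteq> 0 \<Longrightarrow> w c1 = 0 \<Longrightarrow> c2 \<noteq> 0 \<Longrightarrow> w c2 = 0 \<Longrightarrow>
   \<exists>i. i mod 3 = 2 \<and> D (Suc i) \<and> R i = c1 \<and> R (Suc i) = c2"
proof (induction L arbitrary: q k rule: elim_zeros.induct)
  case (1 x z y rest)
  show ?case
  proof (cases "z = 0")
    case True
    then show ?thesis
      using "1.IH"(1) raw_suffix_merge[of q x y rest] "1.prems" by auto
  next
    case False
    then have elim: "elim_zeros (x # z # y # rest) = x # elim_zeros (z # y # rest)"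
      by simp
    have tl: "raw_suffix (Suc q) (z # y # rest)"
      using raw_suffix_tl "1.prems"(1) .
    show ?thesis
    proof (cases k)
      case 0
      have "hd (elim_zeros (z # y # rest)) = c2"
        using "1.prems"(4) elim 0 hd_elim_zeros[OF tl] by (simp add: hd_conv_nth)
      then have "c2 = z"
        using hd_elim_zeros[OF tl] "1.prems"(8) by auto
      then show ?thesis
        using raw_suffix_consecutive_units[OF "1.prems"(1)] "1.prems" elim 0 by auto
    next
      case (Suc k')
      then show ?thesis
        using "1.IH"(2)[OF False tl, of k'] "1.prems" elim by simp
    qed
  qed
next
  case ("2_3" x z)
  then show ?case
    using raw_suffix_consecutive_units[of q x z "[]"] by auto
qed auto

end

locale padic_valuation =
  fixes p :: nat and v :: "'k::field_char_0 \<Rightarrow> int"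
  assumes padic_field: "padic_field p v"
begin

lemma prime_p: "prime p"
  using padic_field by (simp add: padic_field_def)

lemma p_ge_2: "p \<ge> 2"
  using prime_p by (rule prime_ge_2_nat)

lemma of_nat_p_nonzero: "(of_nat p :: 'k) \<noteq> 0"
  using p_ge_2 by simp

lemma v_mult: "x \<noteq> 0 \<Longrightarrow> y \<noteq> 0 \<Longrightarrow> v (x * y) = v x + v y"
  using padic_field by (simp add: padic_field_def)

lemma v_add_ge_min: "x \<noteq> 0 \<Longrightarrow> y \<noteq> 0 \<Longrightarrow> x + y \<noteq> 0 \<Longrightarrow> v (x + y) \<ge> min (v x) (v y)"
  using padic_field by (simp add: padic_field_def)

lemma v_of_rat: "q \<noteq> 0 \<Longrightarrow> v (of_rat q) = qval p q"
  using padic_field by (simp add: padic_field_def)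

lemma rat_dense: "\<exists>q. vge v (x - of_rat q) N"
  using padic_field by (simp add: padic_field_def)

lemma v_1: "v 1 = 0"
  using v_mult[of 1 1] by simp

lemma v_inverse: "x \<noteq> 0 \<Longrightarrow> v (inverse x) = - v x"
  using v_mult[of x "inverse x"] v_1 by simp

lemma v_minus: "x \<noteq> 0 \<Longrightarrow> v (- x) = v x"
proof -
  have "v (-1) = 0"
    using v_mult[of "-1" "-1"] v_1 by simp
  then show "x \<noteq> 0 \<Longrightarrow> v (- x) = v x"
    using v_mult[of "-1" x] by simp
qed

lemma v_divide: "x \<noteq> 0 \<Longrightarrow> y \<noteq> 0 \<Longrightarrow> v (x / y) = v x - v y"
  using v_mult[of x "inverse y"] v_inverse[of y] by (simp add: divide_inverse)

lemma vge_add: "vge v x N \<Longrightarrow> vge v y N \<Longrightarrow> vge v (x + y) N"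
  unfolding vge_def using v_add_ge_min[of x y] by force

lemma vge_minus: "vge v x N \<Longrightarrow> vge v (- x) N"
  unfolding vge_def using v_minus[of x] by force

lemma vge_diff: "vge v x N \<Longrightarrow> vge v y N \<Longrightarrow> vge v (x - y) N"
  using vge_add[of x N "- y"] vge_minus[of y N] by simp

lemma vge_mono: "vge v x N \<Longrightarrow> M \<le> N \<Longrightarrow> vge v x M"
  unfolding vge_def by auto

lemma vge_mult: "vge v x N \<Longrightarrow> vge v y M \<Longrightarrow> vge v (x * y) (N + M)"
  unfolding vge_def by (cases "x = 0 \<or> y = 0") (auto simp: v_mult)

lemma v_eq_if_close:
  assumes close: "vge v (x - y) N" and "x \<noteq> 0" and "v x < N"
  shows "y \<noteq> 0 \<and> v y = v x"
proof (cases "x = y")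
  case False
  then have d: "v (x - y) \<ge> N"
    using close by (simp add: vge_def)
  then have "y \<noteq> 0"
    using assms by auto
  have "v y \<ge> min (v x) (v (- (x - y)))"
    using v_add_ge_min[of x "- (x - y)"] False \<open>x \<noteq> 0\<close> \<open>y \<noteq> 0\<close> by simp
  moreover have "v x \<ge> min (v y) (v (x - y))"
    using v_add_ge_min[of y "x - y"] False \<open>x \<noteq> 0\<close> \<open>y \<noteq> 0\<close> by simp
  ultimately show ?thesis
    using \<open>y \<noteq> 0\<close> v_minus[of "x - y"] False d \<open>v x < N\<close> by auto
qed (use assms in simp)

lemma v_add_eq_if_vge:
  assumes "x \<noteq> 0" "vge v y N" "v x < N"
  shows "x + y \<noteq> 0 \<and> v (x + y) = v x"
  using v_eq_if_close[of x "x + y" N] vge_minus[of y N] assms by simp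

lemma v_of_int: "k \<noteq> 0 \<Longrightarrow> v (of_int k) = int (multiplicity (int p) k)"
  using v_of_rat[of "of_int k"] by (simp add: qval_of_int)

lemma v_of_int_eq_0: "\<not> int p dvd k \<Longrightarrow> v (of_int k) = 0"
  using v_of_int[of k] by (auto simp: not_dvd_imp_multiplicity_0)

lemma v_of_nat_p: "v (of_nat p) = 1"
  using v_of_int[of "int p"] prime_p p_ge_2 by simp

lemma v_power_int: "x \<noteq> 0 \<Longrightarrow> v (x powi n) = n * v x"
proof -
  have pow: "x \<noteq> 0 \<Longrightarrow> v (x ^ m) = int m * v x" for x :: 'k and m
    by (induction m) (auto simp: v_1 v_mult algebra_simps)
  show "x \<noteq> 0 \<Longrightarrow> v (x powi n) = n * v x"
    by (cases "n \<ge> 0") (auto simp: power_int_def pow v_inverse)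
qed

lemma v_p_power_int: "v (of_nat p powi n) = n"
  using v_power_int[OF of_nat_p_nonzero] v_of_nat_p by simp

lemma p_power_int_nonzero: "(of_nat p :: 'k) powi n \<noteq> 0"
  using of_nat_p_nonzero by simp

lemma vge_of_int: "vge v (of_int k) 0"
  unfolding vge_def by (cases "k = 0") (simp_all add: v_of_int)

lemma vge_of_int_multiple: "int p dvd k \<Longrightarrow> vge v (of_int k) 1"
proof -
  assume "int p dvd k"
  then obtain m where "k = int p * m" ..
  moreover have "vge v (of_nat p) 1"
    using v_of_nat_p by (simp add: vge_def)
  ultimately show ?thesis
    using vge_mult[OF _ vge_of_int, of "of_nat p" 1 m] by simp
qed

lemma vge_div_p_power_int: "vge v x n \<Longrightarrow> vge v (x / of_nat p powi n) 0"
  using v_divide[OF _ p_power_int_nonzero, of x n] v_p_power_int by (auto simp: vge_def)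

lemma int_close_to_rat:
  assumes "vge v (of_rat q) 0"
  shows "\<exists>e::int. vge v (of_rat q - of_int e) 1"
proof (cases "q = 0")
  case False
  obtain a b where qab: "quotient_of q = (a, b)"
    by (cases "quotient_of q")
  have "b > 0" "coprime a b" and q: "(of_rat q :: 'k) = of_int a / of_int b"
    using quotient_of_denom_pos[OF qab] quotient_of_coprime[OF qab]
      quotient_of_div[OF qab] by (simp_all add: of_rat_divide)
  have "a \<noteq> 0"
    using False quotient_of_div[OF qab] by auto
  have b_unit: "\<not> int p dvd b"
  proof
    assume "int p dvd b"
    then have "\<not> int p dvd a"
      using \<open>coprime a b\<close> coprime_common_divisor[of a b "int p"] p_ge_2 by auto
    moreover have "v (of_int b :: 'k) \<ge> 1"
      using vge_of_int_multiple[OF \<open>int p dvd b\<close>] \<open>b > 0\<close> by (simp add: vge_def)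
    ultimately have "v (of_rat q :: 'k) < 0"
      using q v_divide[of "of_int a" "of_int b"] v_of_int_eq_0[of a] \<open>a \<noteq> 0\<close> \<open>b > 0\<close> by simp
    then show False
      using assms False by (simp add: vge_def)
  qed
  then have "coprime b (int p)"
    using prime_imp_coprime[of "int p" b] prime_p by (simp add: coprime_commute)
  then obtain u w where uw: "u * b + w * int p = 1"
    using bezout_int[of b "int p"] by (auto simp: coprime_iff_gcd_eq_1)
  have "of_rat q - of_int (a * u) = (of_int (a * w * int p) :: 'k) * inverse (of_int b)"
  proof -
    have "(of_int (a * w * int p) :: 'k) = of_int a * (1 - of_int u * of_int b)"
      using arg_cong[OF uw, of "\<lambda>t. of_int (a * t) :: 'k"] by (simp add: algebra_simps)
    then show ?thesis
      using q \<open>b > 0\<close> by (simp add: field_simps)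
  qed
  moreover have "vge v ((of_int (a * w * int p) :: 'k) * inverse (of_int b)) (1 + 0)"
    using vge_mult[OF vge_of_int_multiple, of "a * w * int p" "inverse (of_int b)" 0]
      v_inverse[of "of_int b"] v_of_int_eq_0[OF b_unit] \<open>b > 0\<close> by (simp add: vge_def)
  ultimately show ?thesis
    by (metis add.right_neutral)
qed (auto intro: exI[of _ 0])

lemma residue_digit_exists:
  assumes "vge v y 0"
  shows "\<exists>d\<in>digitset p. vge v (y - of_int d) 1"
proof -
  obtain q where yq: "vge v (y - of_rat q) 1"
    using rat_dense by blast
  have "vge v (of_rat q) 0"
    using vge_diff[OF assms vge_mono[OF yq]] by simp
  then obtain e where qe: "vge v (of_rat q - of_int e) 1"
    using int_close_to_rat by blast
  obtain d where "d \<in> digitset p" "int p dvd (e - d)"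
    using congruent_digit_exists[OF prime_p] by blast
  moreover have "y - of_int d = (y - of_rat q) + (of_rat q - of_int e) + of_int (e - d)"
    by simp
  ultimately show ?thesis
    using vge_add[OF vge_add[OF yq qe] vge_of_int_multiple] by metis
qed

definition residue_digit :: "'k \<Rightarrow> int" where
  "residue_digit y = (SOME d. d \<in> digitset p \<and> vge v (y - of_int d) 1)"

lemma residue_digit:
  "vge v y 0 \<Longrightarrow> residue_digit y \<in> digitset p \<and> vge v (y - of_int (residue_digit y)) 1"
  unfolding residue_digit_def using residue_digit_exists by (rule someI2_bex)

primrec expansion_remainder :: "'k \<Rightarrow> nat \<Rightarrow> 'k" where
  "expansion_remainder x 0 = x"
| "expansion_remainder x (Suc k) = expansion_remainder x k -
     of_int (residue_digit (expansion_remainder x k / of_nat p powi (v x + int k))) *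
     of_nat p powi (v x + int k)"

definition greedy_digits :: "'k \<Rightarrow> int \<Rightarrow> int" where
  "greedy_digits x n = (if n < v x then 0
     else residue_digit (expansion_remainder x (nat (n - v x)) / of_nat p powi n))"

lemma vge_expansion_remainder:
  assumes "x \<noteq> 0"
  shows "vge v (expansion_remainder x k) (v x + int k)"
proof (induction k)
  case (Suc k)
  define n where "n = v x + int k"
  define y where "y = expansion_remainder x k / of_nat p powi n"
  have "vge v y 0"
    using vge_div_p_power_int Suc by (simp add: y_def n_def)
  moreover have "vge v (of_nat p powi n) n"
    using v_p_power_int by (simp add: vge_def)
  ultimately have "vge v ((y - of_int (residue_digit y)) * of_nat p powi n) (1 + n)"
    using residue_digit vge_mult by blast
  moreover have "expansion_remainder x (Suc k) = (y - of_int (residue_digit y)) * of_nat p powi n"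
    using p_power_int_nonzero by (simp add: y_def n_def algebra_simps)
  ultimately show ?case
    by (simp add: n_def add_ac)
qed (simp add: vge_def)

lemma expansion_remainder_eq:
  "expansion_remainder x k =
     x - of_rat (\<Sum>m\<in>{v x..v x + int k - 1}. of_int (greedy_digits x m) * of_nat p powi m)"
proof (induction k)
  case (Suc k)
  define n where "n = v x + int k"
  have "{v x..n} = insert n {v x..n - 1}"
    using n_def by auto
  then show ?case
    using Suc
    by (simp add: n_def greedy_digits_def of_rat_add of_rat_mult of_rat_power_int algebra_simps)
qed simp

lemma is_padic_expansion_greedy_digits:
  assumes "x \<noteq> 0"
  shows "is_padic_expansion p v x (greedy_digits x)"
  unfolding is_padic_expansion_def
proof (intro conjI allI impI)
  show "greedy_digits x n \<in> digitset p" for n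
  proof (cases "n < v x")
    case False
    then have "vge v (expansion_remainder x (nat (n - v x))) n"
      using vge_expansion_remainder[OF assms, of "nat (n - v x)"] by simp
    then show ?thesis
      using residue_digit vge_div_p_power_int False by (simp add: greedy_digits_def)
  qed (use p_ge_2 in \<open>simp add: greedy_digits_def zero_in_digitset\<close>)
next
  show "greedy_digits x n = 0" if "n < v x" for n
    using that by (simp add: greedy_digits_def)
next
  define y where "y = x / of_nat p powi v x"
  have "y \<noteq> 0" "v y = 0"
    using assms v_divide[OF assms p_power_int_nonzero] v_p_power_int p_ge_2
    by (simp_all add: y_def)
  then have "vge v (y - of_int (residue_digit y)) 1"
    using residue_digit[of y] by (simp add: vge_def)
  then show "greedy_digits x (v x) \<noteq> 0"
    using \<open>y \<noteq> 0\<close> \<open>v y = 0\<close> by (auto simp: greedy_digits_def y_def vge_def)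
next
  fix N assume "N \<ge> v x"
  then show "vge v (x - of_rat (\<Sum>n\<in>{v x..N}. of_int (greedy_digits x n) * of_nat p powi n)) (N + 1)"
    using vge_expansion_remainder[OF assms, of "nat (N - v x + 1)"]
      expansion_remainder_eq[of x "nat (N - v x + 1)"] by simp
qed

lemma digit_eq_if_close:
  assumes "a \<in> digitset p" "b \<in> digitset p"
    and close: "vge v (of_int (a - b) * of_nat p powi n) (n + 1)"
  shows "a = b"
proof (rule ccontr)
  assume "a \<noteq> b"
  then have "v (of_int (a - b) :: 'k) = 0"
    using v_of_int_eq_0[of "a - b"] digitset_not_congruent[OF prime_p assms(1,2)] by simp
  then have "v (of_int (a - b) * of_nat p powi n) = n"
    using v_mult[OF _ p_power_int_nonzero] v_p_power_int \<open>a \<noteq> b\<close> by simp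
  then show False
    using close \<open>a \<noteq> b\<close> p_ge_2 by (simp add: vge_def)
qed

lemma padic_expansion_unique:
  assumes A: "is_padic_expansion p v x a" and B: "is_padic_expansion p v x b"
  shows "a = b"
proof -
  let ?S = "\<lambda>a n. (\<Sum>m\<in>{v x..n}. of_int (a m) * of_nat p powi m :: rat)"
  have agree: "a m = b m" if "v x \<le> m" "m < v x + int k" for k m
    using that
  proof (induction k arbitrary: m)
    case (Suc k)
    define n where "n = v x + int k"
    have "a n = b n"
    proof (rule digit_eq_if_close)
      have "{v x..n} = insert n {v x..n - 1}"
        using n_def by auto
      moreover have "?S a (n - 1) = ?S b (n - 1)"
        using Suc.IH by (intro sum.cong) (auto simp: n_def)
      ultimately have "?S a n - ?S b n = of_int (a n - b n) * of_nat p powi n"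
        by (simp add: algebra_simps)
      then have "of_rat (?S a n) - of_rat (?S b n) = (of_int (a n - b n) * of_nat p powi n :: 'k)"
        by (simp only: of_rat_diff[symmetric] of_rat_mult of_rat_of_int_eq of_rat_power_int
            of_rat_of_nat_eq)
      moreover have "vge v ((x - of_rat (?S b n)) - (x - of_rat (?S a n))) (n + 1)"
        by (rule vge_diff) (use A B n_def in \<open>auto simp: is_padic_expansion_def\<close>)
      ultimately show "vge v (of_int (a n - b n) * of_nat p powi n) (n + 1)"
        by simp
    qed (use A B in \<open>simp_all add: is_padic_expansion_def\<close>)
    moreover have "m < n \<or> m = n"
      using Suc.prems n_def by auto
    ultimately show ?case
      using Suc by (auto simp: n_def)
  qed simp
  show ?thesis
  proof
    fix m
    show "a m = b m"
      using A B agree[of m "nat (m - v x) + 1"]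
      by (cases "m < v x") (auto simp: is_padic_expansion_def)
  qed
qed

lemma is_padic_expansion_digits:
  assumes "x \<noteq> 0"
  shows "is_padic_expansion p v x (digits p v x)"
proof -
  have "\<exists>!a. is_padic_expansion p v x a"
    using is_padic_expansion_greedy_digits[OF assms] padic_expansion_unique by blast
  then show ?thesis
    unfolding digits_def by (rule theI')
qed

lemma vge_diff_digit_sum:
  "vge v (x - of_rat (if x = 0 then 0
     else \<Sum>n\<in>{v x..N}. of_int (digits p v x n) * of_nat p powi n)) (N + 1)"
proof (cases "x \<noteq> 0 \<and> v x \<le> N")
  case True
  then show ?thesis
    using is_padic_expansion_digits[of x] by (simp add: is_padic_expansion_def)
qed (auto simp: vge_def)

lemma vge_diff_s_part: "vge v (x - of_rat (s_part p v x)) 1"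
  using vge_diff_digit_sum[of x 0] by (simp add: s_part_def)

lemma vge_diff_t_part: "vge v (x - of_rat (t_part p v x)) 0"
  using vge_diff_digit_sum[of x "-1"] by (simp add: t_part_def)

(* Only the shape k p + s(x), resp. k + t(x), of the quotient matters here. *)
lemma vge_diff_algC_b: "vge v (x - of_rat (algC_b p v j x)) (if j mod 3 = 0 then 1 else 0)"
proof (cases "j mod 3 = 0")
  case True
  obtain k where "sbar p v x = of_int (k * int p) + s_part p v x"
    unfolding sbar_def by (metis of_int_mult of_int_of_nat_eq)
  then show ?thesis
    using True vge_diff[OF vge_diff_s_part vge_of_int_multiple[of "k * int p"]]
    by (simp add: algC_b_def of_rat_add of_rat_mult algebra_simps)
next
  case False
  obtain k where "tbar p v x = of_int k + t_part p v x"
    unfolding tbar_def by blast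
  then show ?thesis
    using False vge_diff[OF vge_diff_t_part vge_of_int[of k]]
    by (simp add: algC_b_def of_rat_add algebra_simps)
qed

lemma algC_alpha_SucD:
  "algC_alpha p v \<alpha> (Suc j) = Some y \<Longrightarrow> \<exists>x. algC_alpha p v \<alpha> j = Some x \<and>
     x \<noteq> of_rat (algC_b p v j x) \<and> y = inverse (x - of_rat (algC_b p v j x))"
  by (auto split: option.splits if_splits)

lemma v_algC_alpha:
  assumes "algC_alpha p v \<alpha> j = Some x" and "j \<ge> 1"
  shows "x \<noteq> 0 \<and> v x \<le> (if j mod 3 = 1 then -1 else 0)"
proof -
  obtain i where j: "j = Suc i"
    using \<open>j \<ge> 1\<close> by (cases j) auto
  then obtain x' where "x' \<noteq> of_rat (algC_b p v i x')" and x: "x = inverse (x' - of_rat (algC_b p v i x'))"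
    using algC_alpha_SucD assms(1) by blast
  moreover have "vge v (x' - of_rat (algC_b p v i x')) (if i mod 3 = 0 then 1 else 0)"
    by (rule vge_diff_algC_b)
  ultimately show ?thesis
    using v_inverse[of "x' - of_rat (algC_b p v i x')"] j by (auto simp: vge_def mod_Suc)
qed

lemma v_algC_b_mod3_eq_1:
  assumes "algC_alpha p v \<alpha> j = Some x" and "j mod 3 = 1"
  shows "algC_b p v j x \<noteq> 0 \<and> v (of_rat (algC_b p v j x)) < 0"
proof -
  have "j \<ge> 1"
    using assms(2) by (cases j) auto
  then have "x \<noteq> 0" "v x < 0"
    using v_algC_alpha[OF assms(1)] assms(2) by auto
  moreover have "vge v (x - of_rat (algC_b p v j x)) 0"
    using vge_diff_algC_b[of x j] assms(2) by simp
  ultimately show ?thesis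
    using v_eq_if_close by fastforce
qed

lemma algC_b_eq_0_imp_mod3_eq_2:
  assumes "algC_alpha p v \<alpha> j = Some x" and "j \<ge> 1" and "algC_b p v j x = 0"
  shows "j mod 3 = 2"
proof -
  have "j mod 3 \<noteq> 1"
    using v_algC_b_mod3_eq_1[OF assms(1)] assms(3) by auto
  moreover have "j mod 3 \<noteq> 0"
  proof
    assume "j mod 3 = 0"
    then have "vge v x 1"
      using vge_diff_algC_b[of x j] assms(3) by simp
    then show False
      using v_algC_alpha[OF assms(1,2)] \<open>j mod 3 = 0\<close> by (simp add: vge_def)
  qed
  ultimately show ?thesis
    by presburger
qed

lemma v_algC_alpha_mod3_eq_2:
  assumes "algC_alpha p v \<alpha> j = Some x" and "j mod 3 = 2"
    and "vge v (of_rat (algC_b p v j x)) 0"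
  shows "x \<noteq> 0 \<and> v x = 0"
proof -
  have "j \<ge> 1"
    using assms(2) by (cases j) auto
  then have "x \<noteq> 0" "v x \<le> 0"
    using v_algC_alpha[OF assms(1)] assms(2) by auto
  moreover have "\<not> v x < 0"
  proof
    assume "v x < 0"
    moreover have "vge v (x - of_rat (algC_b p v j x)) 0"
      using vge_diff_algC_b[of x j] assms(2) by simp
    ultimately have "v (of_rat (algC_b p v j x) :: 'k) < 0" "algC_b p v j x \<noteq> 0"
      using v_eq_if_close \<open>x \<noteq> 0\<close> by fastforce+
    then show False
      using assms(3) by (simp add: vge_def)
  qed
  ultimately show ?thesis
    by simp
qed

lemma v_algC_b_after_zero:
  assumes y: "algC_alpha p v \<alpha> (Suc j) = Some y" and "j mod 3 = 2"
    and x: "algC_alpha p v \<alpha> j = Some x" and "algC_b p v j x = 0"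
  shows "algC_b p v (Suc j) y \<noteq> 0 \<and> v (of_rat (algC_b p v (Suc j) y)) = 0"
proof -
  have "y = inverse x"
    using algC_alpha_SucD[OF y] x assms(4) by auto
  moreover have "x \<noteq> 0" "v x = 0"
    using v_algC_alpha_mod3_eq_2[OF x \<open>j mod 3 = 2\<close>] assms(4) by auto
  ultimately have "y \<noteq> 0" "v y = 0"
    using v_inverse by auto
  moreover have "vge v (y - of_rat (algC_b p v (Suc j) y)) 1"
    using vge_diff_algC_b[of y "Suc j"] \<open>j mod 3 = 2\<close> by (simp add: mod_Suc)
  ultimately show ?thesis
    using v_eq_if_close by fastforce
qed

lemma v_algC_b_mult_add_1:
  assumes y: "algC_alpha p v \<alpha> (Suc j) = Some y" and "j mod 3 = 2"
    and x: "algC_alpha p v \<alpha> j = Some x"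
    and B: "B = of_rat (algC_b p v j x)" "B \<noteq> 0" "v B = 0"
    and B': "B' = of_rat (algC_b p v (Suc j) y)" "B' \<noteq> 0" "v B' = 0"
  shows "B * B' + 1 \<noteq> 0 \<and> v (B * B' + 1) = 0"
proof -
  have "x \<noteq> 0" "v x = 0"
    using v_algC_alpha_mod3_eq_2[OF x \<open>j mod 3 = 2\<close>] B by (auto simp: vge_def)
  have y_def: "y = inverse (x - B)" and "x \<noteq> B"
    using algC_alpha_SucD[OF y] x B(1) by auto
  have "vge v (B' - y) 1"
    using vge_minus[OF vge_diff_algC_b[of y "Suc j"]] \<open>j mod 3 = 2\<close> B'(1) by (simp add: mod_Suc)
  then have "y \<noteq> 0" "v y = 0"
    using v_eq_if_close[of B' y 1] B' by auto
  have "B * B' + 1 = B * B' + (x - B) * y"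
    using \<open>x \<noteq> B\<close> by (simp add: y_def)
  also have "\<dots> = x * y + B * (B' - y)"
    by (simp add: algebra_simps)
  finally have "B * B' + 1 = x * y + B * (B' - y)" .
  moreover have "vge v (B * (B' - y)) 1"
    using vge_mult[OF _ \<open>vge v (B' - y) 1\<close>, of B 0] B by (simp add: vge_def)
  moreover have "x * y \<noteq> 0" "v (x * y) = 0"
    using \<open>x \<noteq> 0\<close> \<open>v x = 0\<close> \<open>y \<noteq> 0\<close> \<open>v y = 0\<close> v_mult by auto
  ultimately show ?thesis
    using v_add_eq_if_vge[of "x * y" "B * (B' - y)" 1] by simp
qed

lemma zero_elimination_pattern_algC:
  "zero_elimination_pattern (\<lambda>j. algC_b p v j (the (algC_alpha p v \<alpha> j)))
     (\<lambda>j. algC_alpha p v \<alpha> j \<noteq> None) (qval p)"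
proof
  fix j
  assume "algC_alpha p v \<alpha> j \<noteq> None"
  then obtain x where x: "algC_alpha p v \<alpha> j = Some x"
    by blast
  show "j mod 3 = 1 \<Longrightarrow> algC_b p v j (the (algC_alpha p v \<alpha> j)) \<noteq> 0 \<and>
      qval p (algC_b p v j (the (algC_alpha p v \<alpha> j))) < 0"
    using v_algC_b_mod3_eq_1[OF x] v_of_rat x by auto
  show "j \<ge> 1 \<Longrightarrow> algC_b p v j (the (algC_alpha p v \<alpha> j)) = 0 \<Longrightarrow> j mod 3 = 2"
    using algC_b_eq_0_imp_mod3_eq_2[OF x] x by simp
next
  fix j
  assume "algC_alpha p v \<alpha> (Suc j) \<noteq> None" and "j mod 3 = 2"
    and zero: "algC_b p v j (the (algC_alpha p v \<alpha> j)) = 0"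
  then obtain x y where y: "algC_alpha p v \<alpha> (Suc j) = Some y" and x: "algC_alpha p v \<alpha> j = Some x"
    using algC_alpha_SucD by blast
  then have "algC_b p v (Suc j) y \<noteq> 0 \<and> v (of_rat (algC_b p v (Suc j) y)) = 0"
    using v_algC_b_after_zero[OF y \<open>j mod 3 = 2\<close> x] zero by simp
  then show "algC_b p v (Suc j) (the (algC_alpha p v \<alpha> (Suc j))) \<noteq> 0 \<and>
      qval p (algC_b p v (Suc j) (the (algC_alpha p v \<alpha> (Suc j)))) = 0"
    unfolding y option.sel using v_of_rat[of "algC_b p v (Suc j) y"] by simp
next
  fix x y :: rat
  assume "x \<noteq> 0" "qval p x < 0" "y \<noteq> 0" "qval p y = 0"
  then have "(of_rat (x + y) :: 'k) \<noteq> 0 \<and> v (of_rat (x + y) :: 'k) < 0"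
    using v_add_eq_if_vge[of "of_rat x" "of_rat y" 0] v_of_rat[of x] v_of_rat[of y]
    by (simp add: vge_def of_rat_add)
  then show "x + y \<noteq> 0 \<and> qval p (x + y) < 0"
    using v_of_rat[of "x + y"] by auto
qed

lemma elim_zeros_algC_consecutive_units:
  assumes "Suc k < length (elim_zeros (algC_raw_prefix p v \<alpha> N))"
    and "elim_zeros (algC_raw_prefix p v \<alpha> N) ! k = c1"
    and "elim_zeros (algC_raw_prefix p v \<alpha> N) ! Suc k = c2"
    and "c1 \<noteq> 0" "qval p c1 = 0" "c2 \<noteq> 0" "qval p c2 = 0"
  shows "\<exists>i x y. i mod 3 = 2 \<and> algC_alpha p v \<alpha> i = Some x \<and>
    algC_alpha p v \<alpha> (Suc i) = Some y \<and> algC_b p v i x = c1 \<and> algC_b p v (Suc i) y = c2"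
proof -
  interpret zero_elimination_pattern "\<lambda>j. algC_b p v j (the (algC_alpha p v \<alpha> j))"
    "\<lambda>j. algC_alpha p v \<alpha> j \<noteq> None" "qval p"
    by (rule zero_elimination_pattern_algC)
  have "raw_suffix 0 (algC_raw_prefix p v \<alpha> N)"
    using algC_raw_prefix_nth[of _ p v \<alpha> N] unfolding raw_suffix_def by (auto simp: hd_conv_nth)
  then obtain i where "i mod 3 = 2" "algC_alpha p v \<alpha> (Suc i) \<noteq> None"
    "algC_b p v i (the (algC_alpha p v \<alpha> i)) = c1"
    "algC_b p v (Suc i) (the (algC_alpha p v \<alpha> (Suc i))) = c2"
    using elim_zeros_consecutive_units assms by blast
  then show ?thesis
    using algC_alpha_SucD by fastforce
qed

end

theorem proposition4:
  fixes p :: nat and v :: "'k::field_char_0 \<Rightarrow> int" and \<alpha> :: 'k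
    and n :: nat and b0 b1 b2 :: rat
  assumes "padic_field p v"
    and "\<exists>f::rat poly. f \<noteq> 0 \<and> poly (map_poly of_rat f) \<alpha> = 0"
    and "algC_term p v \<alpha> n b0"
    and "algC_term p v \<alpha> (n + 1) b1"
    and "algC_term p v \<alpha> (n + 2) b2"
    and "b0 \<noteq> 0" and "qval p b0 < 0"
    and "b1 \<noteq> 0" and "qval p b1 = 0"
    and "b2 \<noteq> 0" and "qval p b2 = 0"
  shows "b1 * b2 + 1 \<noteq> 0 \<and> qval p (b1 * b2 + 1) = 0"
proof -
  interpret padic_valuation p v
    using assms(1) by unfold_locales
  obtain N where "Suc (n + 1) < length (elim_zeros (algC_raw_prefix p v \<alpha> N))"
    "elim_zeros (algC_raw_prefix p v \<alpha> N) ! (n + 1) = b1"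
    "elim_zeros (algC_raw_prefix p v \<alpha> N) ! Suc (n + 1) = b2"
    using eventually_conj[OF assms(4,5)[unfolded algC_term_def]]
    unfolding eventually_sequentially by auto
  then obtain i x y where i: "i mod 3 = 2" and x: "algC_alpha p v \<alpha> i = Some x"
    and y: "algC_alpha p v \<alpha> (Suc i) = Some y" and "algC_b p v i x = b1" "algC_b p v (Suc i) y = b2"
    using elim_zeros_algC_consecutive_units assms(8-11) by blast
  then have "of_rat b1 * of_rat b2 + 1 \<noteq> (0 :: 'k) \<and> v (of_rat b1 * of_rat b2 + 1) = 0"
    using v_algC_b_mult_add_1[OF y i x, of "of_rat b1" "of_rat b2"] v_of_rat assms(8-11) by simp
  then show ?thesis
    using v_of_rat[of "b1 * b2 + 1"] by (metis of_rat_1 of_rat_add of_rat_eq_0_iff of_rat_mult)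
qed

end
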